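(* A sequence of positive integers $(k_n,\ldots,k_1)$ is the restricted sequence of some non-crossing $n$-chord diagram if and only if $k_1=1$ and $k_{i+1}\le k_i+1$ for $1\le i\le n-1$.
   Context: A non-crossing $n$-chord diagram is a non-crossing perfect matching of $\{1,\ldots,2n\}$ (arcs in the upper half-plane with endpoints $1,\ldots,2n$); $D_n$ is the set of these, $D_0=\{\phi\}$. For $1\le k\le 2n+1$, $l_k:D_n\to D_{n+1}$: $l_k(\alpha)$ matches $k$ with $k+1$, and each old point $i$ becomes $i$ if $i<k$ and $i+2$ if $i\ge k$, old pairs kept. For $\alpha\in D_n$ ($n\ge1$) let $k_n$ be the smallest $k$ such that $k$ is matched with $k+1$, and $\alpha'\in D_{n-1}$ be $\alpha$ with that arc removed and points renumbered order-preservingly, so $\alpha=l_{k_n}(\alpha')$. The restricted sequence of $\alpha$ is $(k_n,k_{n-1},\ldots,k_1)$, where $(k_{n-1},\ldots,k_1)$ is the restricted sequence of $\alpha'$ (empty for $\phi$). *)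

theory Defs
  imports Main
begin

definition perfect_matching :: "nat \<Rightarrow> (nat \<times> nat) set \<Rightarrow> bool" where
  "perfect_matching n M \<longleftrightarrow>
     (\<forall>(a,b)\<in>M. a < b \<and> a \<in> {1..2*n} \<and> b \<in> {1..2*n}) \<and>
     (\<forall>i\<in>{1..2*n}. \<exists>!p. p \<in> M \<and> (i = fst p \<or> i = snd p))"

definition noncrossing :: "(nat \<times> nat) set \<Rightarrow> bool" where
  "noncrossing M \<longleftrightarrow> (\<forall>(a,b)\<in>M. \<forall>(c,d)\<in>M. \<not> (a < c \<and> c < b \<and> b < d))"

definition D :: "nat \<Rightarrow> (nat \<times> nat) set set" where
  "D n = {M. perfect_matching n M \<and> noncrossing M}"

definition shift :: "nat \<Rightarrow> nat \<Rightarrow> nat" where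
  "shift k i = (if i < k then i else i + 2)"

definition l :: "nat \<Rightarrow> (nat \<times> nat) set \<Rightarrow> (nat \<times> nat) set" where
  "l k M = insert (k, k+1) ((\<lambda>(a,b). (shift k a, shift k b)) ` M)"

definition unshift :: "nat \<Rightarrow> nat \<Rightarrow> nat" where
  "unshift k i = (if i < k then i else i - 2)"

definition remove_arc :: "nat \<Rightarrow> (nat \<times> nat) set \<Rightarrow> (nat \<times> nat) set" where
  "remove_arc k M = (\<lambda>(a,b). (unshift k a, unshift k b)) ` (M - {(k, k+1)})"

definition kmin :: "(nat \<times> nat) set \<Rightarrow> nat" where
  "kmin M = (LEAST k. (k, k+1) \<in> M)"

text \<open>Restricted sequence [k_n, ..., k_1] of a diagram in D n.\<close>
fun rseq :: "nat \<Rightarrow> (nat \<times> nat) set \<Rightarrow> nat list" where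
  "rseq 0 M = []"
| "rseq (Suc n) M = kmin M # rseq n (remove_arc (kmin M) M)"

end

theory Submission
  imports Defs
begin

text \<open>
  Every nonempty non-crossing perfect matching has an arc joining adjacent points: an arc of
  minimal length encloses no point, since the arc through an enclosed point would be nested
  inside it or cross it. For \<open>1 \<le> k \<le> 2n+1\<close>, \<open>l k\<close> embeds \<open>D n\<close> into \<open>D (n+1)\<close> with left
  inverse \<open>remove_arc k\<close>, so both directions follow by induction on \<open>n\<close> once one knows when the
  inserted arc is the leftmost adjacent arc: \<open>kmin (l k \<beta>) = k\<close> iff \<open>k \<le> kmin \<beta> + 1\<close>, because
  an adjacent arc (j, j+1) of \<open>\<beta>\<close> with \<open>j + 1 < k\<close> is not moved by \<open>l k\<close>. The bound
  \<open>k \<le> 2n+1\<close> needed for the insertion follows from \<open>k\<^sub>i \<le> i\<close>.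
\<close>

lemma strict_mono_shift: "strict_mono (shift k)"
  by (auto simp: strict_mono_def shift_def)

lemma inj_shift: "inj (shift k)"
  using strict_mono_shift strict_mono_imp_inj_on by blast

lemma shift_neq [simp]:
  "shift k i \<noteq> k" "shift k i \<noteq> Suc k" "k \<noteq> shift k i" "Suc k \<noteq> shift k i"
  by (auto simp: shift_def)

lemma shift_inject [simp]: "shift k a = shift k b \<longleftrightarrow> a = b"
  using inj_shift by (simp add: inj_eq)

lemma unshift_shift [simp]: "unshift k (shift k i) = i"
  by (auto simp: shift_def unshift_def)

lemma shift_unshift: "i \<noteq> k \<Longrightarrow> i \<noteq> Suc k \<Longrightarrow> shift k (unshift k i) = i"
  by (auto simp: shift_def unshift_def)

lemma shift_mem_interval_iff:
  assumes "1 \<le> k" "k \<le> 2*n+1"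
  shows "shift k i \<in> {1..2 * Suc n} \<longleftrightarrow> i \<in> {1..2*n}"
  using assms by (auto simp: shift_def)

lemma interval_eq_shift_image:
  assumes "1 \<le> k" "k \<le> 2*n+1"
  shows "{1..2 * Suc n} = insert k (insert (Suc k) (shift k ` {1..2*n}))"
proof -
  have "i \<in> shift k ` {1..2*n}" if "i \<in> {1..2 * Suc n}" "i \<noteq> k" "i \<noteq> Suc k" for i
    using that assms shift_unshift[of i k]
    by (intro image_eqI[of _ _ "unshift k i"]) (auto simp: unshift_def)
  moreover have "shift k ` {1..2*n} \<subseteq> {1..2 * Suc n}"
    using shift_mem_interval_iff[OF assms] by blast
  moreover have "k \<in> {1..2 * Suc n}" "Suc k \<in> {1..2 * Suc n}"
    using assms by auto
  ultimately show ?thesis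
    by blast
qed

lemma l_eq: "l k M = insert (k, Suc k) (map_prod (shift k) (shift k) ` M)"
  by (simp add: l_def map_prod_def)

lemma remove_arc_eq: "remove_arc k M = map_prod (unshift k) (unshift k) ` (M - {(k, Suc k)})"
  by (simp add: remove_arc_def map_prod_def)

lemma noncrossing_insert_adjacent: "noncrossing (insert (k, Suc k) M) \<longleftrightarrow> noncrossing M"
  by (auto simp: noncrossing_def)

lemma noncrossing_strict_mono_image:
  "strict_mono f \<Longrightarrow> noncrossing (map_prod f f ` M) \<longleftrightarrow> noncrossing M"
  by (simp add: noncrossing_def strict_mono_less case_prod_beta)

lemma noncrossing_l_iff: "noncrossing (l k M) \<longleftrightarrow> noncrossing M"
  by (simp add: l_eq noncrossing_insert_adjacent noncrossing_strict_mono_image strict_mono_shift)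

lemma ex1_mem_image_iff:
  assumes "inj f"
  shows "(\<exists>!y. y \<in> f ` S) \<longleftrightarrow> (\<exists>!x. x \<in> S)"
proof
  assume "\<exists>!y. y \<in> f ` S"
  then show "\<exists>!x. x \<in> S"
    using injD[OF assms] by blast
qed blast

lemma unique_arc_at_shift_l_iff:
  "(\<exists>!p. p \<in> l k M \<and> (shift k i = fst p \<or> shift k i = snd p)) \<longleftrightarrow>
   (\<exists>!p. p \<in> M \<and> (i = fst p \<or> i = snd p))"
proof -
  have "{p \<in> l k M. shift k i = fst p \<or> shift k i = snd p} =
        map_prod (shift k) (shift k) ` {p \<in> M. i = fst p \<or> i = snd p}"
    by (auto simp: l_eq)
  moreover have "inj (map_prod (shift k) (shift k))"
    using inj_shift by (simp add: prod.inj_map)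
  ultimately have "(\<exists>!p. p \<in> {p \<in> l k M. shift k i = fst p \<or> shift k i = snd p}) \<longleftrightarrow>
                  (\<exists>!p. p \<in> {p \<in> M. i = fst p \<or> i = snd p})"
    by (simp only: ex1_mem_image_iff)
  then show ?thesis
    by simp
qed

lemma unique_arc_at_new_point_l:
  "i = k \<or> i = Suc k \<Longrightarrow> \<exists>!p. p \<in> l k M \<and> (i = fst p \<or> i = snd p)"
  by (auto simp: l_eq)

lemma arcs_in_range_l_iff:
  assumes "1 \<le> k" "k \<le> 2*n+1"
  shows "(\<forall>(a,b)\<in>l k M. a < b \<and> a \<in> {1..2 * Suc n} \<and> b \<in> {1..2 * Suc n}) \<longleftrightarrow>
         (\<forall>(a,b)\<in>M. a < b \<and> a \<in> {1..2*n} \<and> b \<in> {1..2*n})"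
proof -
  have "shift k a < shift k b \<and> shift k a \<in> {1..2 * Suc n} \<and> shift k b \<in> {1..2 * Suc n} \<longleftrightarrow>
        a < b \<and> a \<in> {1..2*n} \<and> b \<in> {1..2*n}" for a b
    by (simp only: shift_mem_interval_iff[OF assms] strict_mono_less[OF strict_mono_shift])
  moreover have "k < Suc k \<and> k \<in> {1..2 * Suc n} \<and> Suc k \<in> {1..2 * Suc n}"
    using assms by simp
  ultimately show ?thesis
    unfolding l_eq Ball_image_comp
    by (simp only: ball_simps comp_def split_def fst_map_prod snd_map_prod fst_conv snd_conv simp_thms)
qed

lemma perfect_matching_l_iff:
  assumes "1 \<le> k" "k \<le> 2*n+1"
  shows "perfect_matching (Suc n) (l k M) \<longleftrightarrow> perfect_matching n M"
proof -
  let ?covered = "\<lambda>M i. \<exists>!p. p \<in> M \<and> (i = fst p \<or> i = snd p)"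
  have "(\<forall>i\<in>{1..2 * Suc n}. ?covered (l k M) i) \<longleftrightarrow>
        (\<forall>i\<in>{1..2*n}. ?covered (l k M) (shift k i))"
    unfolding interval_eq_shift_image[OF assms] Ball_image_comp
    using unique_arc_at_new_point_l[of k k M] unique_arc_at_new_point_l[of "Suc k" k M]
    by (simp only: ball_simps comp_def simp_thms)
  also have "\<dots> \<longleftrightarrow> (\<forall>i\<in>{1..2*n}. ?covered M i)"
    by (simp only: unique_arc_at_shift_l_iff)
  finally show ?thesis
    unfolding perfect_matching_def arcs_in_range_l_iff[OF assms] by (simp only:)
qed

lemma l_mem_D_iff:
  assumes "1 \<le> k" "k \<le> 2*n+1"
  shows "l k M \<in> D (Suc n) \<longleftrightarrow> M \<in> D n"
  by (simp add: D_def perfect_matching_l_iff[OF assms] noncrossing_l_iff)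

lemma perfect_matching_arcD:
  "perfect_matching n M \<Longrightarrow> (a, b) \<in> M \<Longrightarrow> a < b \<and> a \<in> {1..2*n} \<and> b \<in> {1..2*n}"
  unfolding perfect_matching_def by blast

lemma perfect_matching_coverE:
  assumes "perfect_matching n M" "i \<in> {1..2*n}"
  obtains a b where "(a, b) \<in> M" "i = a \<or> i = b"
proof -
  have "\<exists>!p. p \<in> M \<and> (i = fst p \<or> i = snd p)"
    using assms unfolding perfect_matching_def by blast
  then obtain p where "p \<in> M" "i = fst p \<or> i = snd p"
    by blast
  then show ?thesis
    using that[of "fst p" "snd p"] by simp
qed

lemma perfect_matching_arc_unique:
  assumes "perfect_matching n M" "p \<in> M" "q \<in> M"
    and "i = fst p \<or> i = snd p" "i = fst q \<or> i = snd q"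
  shows "p = q"
proof -
  have "i \<in> {1..2*n}"
    using assms(4) perfect_matching_arcD[OF assms(1), of "fst p" "snd p"] assms(2) by auto
  then show ?thesis
    using assms unfolding perfect_matching_def by blast
qed

lemma noncrossing_nested_arc:
  assumes "M \<in> D n" "(a, b) \<in> M" "Suc a < b"
  obtains c d where "(c, d) \<in> M" "a < c" "d < b"
proof -
  have pm: "perfect_matching n M" and nc: "noncrossing M"
    using assms(1) by (auto simp: D_def)
  have "Suc a \<in> {1..2*n}"
    using perfect_matching_arcD[OF pm assms(2)] assms(3) by auto
  then obtain c d where cd: "(c, d) \<in> M" "Suc a = c \<or> Suc a = d"
    by (rule perfect_matching_coverE[OF pm])
  have "c < d"
    using perfect_matching_arcD[OF pm cd(1)] by blast
  from cd(2) show ?thesis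
  proof
    assume "Suc a = c"
    moreover have "d \<noteq> b"
      using perfect_matching_arc_unique[OF pm cd(1) assms(2), of b] \<open>Suc a = c\<close> by auto
    moreover have "\<not> (a < c \<and> c < b \<and> b < d)"
      using nc assms(2) cd(1) unfolding noncrossing_def by blast
    ultimately show ?thesis
      using that cd(1) assms(3) by fastforce
  next
    assume "Suc a = d"
    moreover have "c \<noteq> a"
      using perfect_matching_arc_unique[OF pm cd(1) assms(2), of a] \<open>Suc a = d\<close> assms(3) by auto
    moreover have "\<not> (c < a \<and> a < d \<and> d < b)"
      using nc assms(2) cd(1) unfolding noncrossing_def by blast
    ultimately show ?thesis
      using \<open>c < d\<close> assms(3) by simp
  qed
qed

lemma adjacent_arc_exists:
  assumes "M \<in> D n" "(a, b) \<in> M"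
  shows "\<exists>k. (k, Suc k) \<in> M"
  using assms(2)
proof (induction "b - a" arbitrary: a b rule: less_induct)
  case less
  have "a < b"
    using assms(1) less.prems by (auto simp: D_def dest: perfect_matching_arcD)
  show ?case
  proof (cases "b = Suc a")
    case True
    then show ?thesis
      using less.prems by blast
  next
    case False
    with \<open>a < b\<close> have "Suc a < b"
      by simp
    then obtain c d where cd: "(c, d) \<in> M" "a < c" "d < b"
      by (rule noncrossing_nested_arc[OF assms(1) less.prems])
    then have "d - c < b - a"
      using \<open>a < b\<close> by arith
    then show ?thesis
      using cd(1) by (rule less.hyps)
  qed
qed

lemma kmin_le: "(j, Suc j) \<in> M \<Longrightarrow> kmin M \<le> j"
  unfolding kmin_def by (rule Least_le) simp

lemma kmin_mem:
  assumes "M \<in> D (Suc n)"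
  shows "(kmin M, Suc (kmin M)) \<in> M"
proof -
  have "perfect_matching (Suc n) M"
    using assms by (simp add: D_def)
  then obtain a b where "(a, b) \<in> M"
    by (rule perfect_matching_coverE[of _ _ 1]) simp
  then obtain k where "(k, Suc k) \<in> M"
    using adjacent_arc_exists[OF assms] by blast
  then show ?thesis
    using LeastI[of "\<lambda>k. (k, k + 1) \<in> M" k] by (simp add: kmin_def)
qed

lemma kmin_l_le:
  assumes "(j, Suc j) \<in> M"
  shows "kmin (l k M) \<le> Suc j"
proof (cases "Suc j < k")
  case True
  then have "(j, Suc j) \<in> l k M"
    using assms by (force simp: l_eq shift_def)
  then show ?thesis
    using kmin_le le_SucI by blast
next
  case False
  have "(k, Suc k) \<in> l k M"
    by (simp add: l_eq)
  then have "kmin (l k M) \<le> k"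
    by (rule kmin_le)
  then show ?thesis
    using False by simp
qed

lemma kmin_l:
  assumes "\<forall>j. (j, Suc j) \<in> M \<longrightarrow> k \<le> Suc j"
  shows "kmin (l k M) = k"
  unfolding kmin_def
proof (rule Least_equality)
  show "(k, k + 1) \<in> l k M"
    by (simp add: l_eq)
next
  fix i
  assume "(i, i + 1) \<in> l k M"
  then consider "i = k" | a b where "(a, b) \<in> M" "i = shift k a" "Suc i = shift k b"
    by (auto simp: l_eq)
  then show "k \<le> i"
  proof cases
    case 2
    then show ?thesis
      using assms by (auto simp: shift_def split: if_splits)
  qed simp
qed

lemma remove_arc_l: "remove_arc k (l k M) = M"
proof -
  have "l k M - {(k, Suc k)} = map_prod (shift k) (shift k) ` M"
    by (auto simp: l_eq)
  then show ?thesis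
    by (simp add: remove_arc_eq image_image prod.map_comp comp_def)
qed

lemma l_remove_arc:
  assumes "perfect_matching n M" "(k, Suc k) \<in> M"
  shows "l k (remove_arc k M) = M"
proof -
  have avoid: "i \<noteq> k \<and> i \<noteq> Suc k" if "p \<in> M - {(k, Suc k)}" "i = fst p \<or> i = snd p" for p i
    using perfect_matching_arc_unique[OF assms(1) _ assms(2), of p i] that by auto
  have "map_prod (shift k) (shift k) ` remove_arc k M =
        (\<lambda>p. map_prod (shift k) (shift k) (map_prod (unshift k) (unshift k) p)) ` (M - {(k, Suc k)})"
    by (simp add: remove_arc_eq image_image)
  also have "\<dots> = M - {(k, Suc k)}"
  proof -
    have "map_prod (shift k) (shift k) (map_prod (unshift k) (unshift k) p) = p"
      if "p \<in> M - {(k, Suc k)}" for p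
      using avoid[OF that, of "fst p"] avoid[OF that, of "snd p"] by (cases p) (simp add: shift_unshift)
    then show ?thesis
      by (simp cong: image_cong_simp)
  qed
  finally show ?thesis
    using assms(2) by (auto simp: l_eq)
qed

lemma kmin_decomposition:
  assumes "M \<in> D (Suc n)"
  shows "1 \<le> kmin M" "kmin M \<le> 2*n+1"
    and "l (kmin M) (remove_arc (kmin M) M) = M" "remove_arc (kmin M) M \<in> D n"
proof -
  have pm: "perfect_matching (Suc n) M"
    using assms by (simp add: D_def)
  have mem: "(kmin M, Suc (kmin M)) \<in> M"
    using assms by (rule kmin_mem)
  show bounds: "1 \<le> kmin M" "kmin M \<le> 2*n+1"
    using perfect_matching_arcD[OF pm mem] by auto
  show eq: "l (kmin M) (remove_arc (kmin M) M) = M"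
    by (rule l_remove_arc[OF pm mem])
  show "remove_arc (kmin M) M \<in> D n"
    using l_mem_D_iff[OF bounds, of "remove_arc (kmin M) M"] eq assms by simp
qed

lemma rseq_l: "kmin (l k M) = k \<Longrightarrow> rseq (Suc n) (l k M) = k # rseq n M"
  by (simp add: remove_arc_l)

fun admissible :: "nat list \<Rightarrow> bool" where
  "admissible [] \<longleftrightarrow> False"
| "admissible [k] \<longleftrightarrow> k = 1"
| "admissible (k # k' # ks) \<longleftrightarrow> k \<le> Suc k' \<and> admissible (k' # ks)"

lemma admissible_hd_le_length: "admissible ks \<Longrightarrow> hd ks \<le> length ks"
  by (induction ks rule: admissible.induct) auto

lemma admissible_iff:
  "ks \<noteq> [] \<Longrightarrow>
   admissible ks \<longleftrightarrow> last ks = 1 \<and> (\<forall>j. j + 1 < length ks \<longrightarrow> ks ! j \<le> ks ! (j+1) + 1)"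
proof (induction ks rule: admissible.induct)
  case (3 k k' ks)
  have "(\<forall>j. j + 1 < length (k # k' # ks) \<longrightarrow> Q j) \<longleftrightarrow> (\<forall>j < Suc (length ks). Q j)" for Q
    by auto
  then show ?case
    using "3.IH" by (auto simp: All_less_Suc2)
qed simp_all

lemma admissible_rseq: "M \<in> D (Suc n) \<Longrightarrow> admissible (rseq (Suc n) M)"
proof (induction n arbitrary: M)
  case 0
  then have "kmin M = 1"
    using kmin_decomposition(1,2)[OF 0] by simp
  then show ?case
    by simp
next
  case (Suc n)
  let ?N = "remove_arc (kmin M) M"
  have N: "?N \<in> D (Suc n)"
    using Suc.prems by (rule kmin_decomposition(4))
  have "kmin M \<le> Suc (kmin ?N)"
    using kmin_l_le[OF kmin_mem[OF N], of "kmin M"] kmin_decomposition(3)[OF Suc.prems] by simp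
  then show ?case
    using Suc.IH[OF N] by simp
qed

lemma admissible_imp_rseq:
  assumes "admissible ks" "length ks = Suc n" "\<forall>k\<in>set ks. 0 < k"
  shows "\<exists>M\<in>D (Suc n). rseq (Suc n) M = ks"
  using assms
proof (induction n arbitrary: ks)
  case 0
  then have ks: "ks = [1]"
    by (cases ks) auto
  have "{} \<in> D 0"
    by (simp add: D_def perfect_matching_def noncrossing_def)
  then have "l 1 {} \<in> D 1"
    using l_mem_D_iff[of 1 0] by simp
  moreover have "kmin (l 1 {}) = 1"
    by (rule kmin_l) simp
  ultimately show ?case
    using rseq_l[of 1 "{}" 0] ks by auto
next
  case (Suc n)
  then obtain k k' ks' where ks: "ks = k # k' # ks'"
    by (metis length_Suc_conv)
  with Suc.prems have k: "0 < k" "k \<le> Suc k'"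
    by auto
  obtain N where N: "N \<in> D (Suc n)" "rseq (Suc n) N = k' # ks'"
    using Suc.IH[of "k' # ks'"] Suc.prems ks by auto
  have "k \<le> 2 * Suc n + 1"
    using admissible_hd_le_length[OF Suc.prems(1)] Suc.prems(2) ks by simp
  then have "l k N \<in> D (Suc (Suc n))"
    using l_mem_D_iff k(1) N(1) by simp
  moreover have kmin: "kmin (l k N) = k"
    using kmin_le[of _ N] N(2) k(2) by (intro kmin_l) force
  moreover have "rseq (Suc (Suc n)) (l k N) = ks"
    unfolding rseq_l[OF kmin] N(2) ks by (rule refl)
  ultimately show ?case
    by blast
qed

theorem mainTheorem3:
  fixes n :: nat and ks :: "nat list"
  assumes "n \<ge> 1" and "length ks = n" and "\<forall>k\<in>set ks. k > 0"
  shows "(\<exists>\<alpha>\<in>D n. rseq n \<alpha> = ks) \<longleftrightarrow>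
         (last ks = 1 \<and> (\<forall>j. j + 1 < n \<longrightarrow> ks ! j \<le> ks ! (j+1) + 1))"
proof -
  obtain m where m: "n = Suc m"
    using assms(1) by (cases n) auto
  have "ks \<noteq> []"
    using assms(2) m by auto
  have "(\<exists>\<alpha>\<in>D n. rseq n \<alpha> = ks) \<longleftrightarrow> admissible ks"
    using admissible_rseq admissible_imp_rseq assms(2,3) unfolding m by blast
  also have "\<dots> \<longleftrightarrow> last ks = 1 \<and> (\<forall>j. j + 1 < n \<longrightarrow> ks ! j \<le> ks ! (j+1) + 1)"
    by (rule admissible_iff[OF \<open>ks \<noteq> []\<close>, unfolded assms(2)])
  finally show ?thesis .
qed

end
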